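(* Let $\alpha>0$, $\sigma>0$, and let $U,V$ be the continuous linear operators on $\mathcal E^1_{\min}(\mathbb C)$ described in the context. Then, as continuous linear operators on $\mathcal E^1_{\min}(\mathbb C)$, $$U=Z\,E_{-\alpha},\qquad V=E_\alpha,$$ i.e. $(Uf)(z)=zf(z-\alpha)$ and $(Vf)(z)=f(z+\alpha)$ for all $f\in\mathcal E^1_{\min}(\mathbb C)$, $z\in\mathbb C$.
   Context: $\mathcal E^1_{\min}(\mathbb C)$ is the Fréchet space of entire functions $f$ with $\sup_{z\in\mathbb C}|f(z)|e^{-|z|/n}<\infty$ for all $n\in\mathbb N$, topologized by these norms. Let $\pi_{\alpha,\sigma}=\exp(-\sigma/\alpha^2)\sum_{n\ge0}\frac{1}{n!}(\sigma/\alpha^2)^n\delta_{\alpha n}$ on $\alpha\mathbb N_0$ and let $(c_n)_{n\ge0}$ be the monic polynomials orthogonal with respect to it, with generating function $\sum_{n\ge0}\frac{t^n}{n!}c_n(z)=\exp\big(\frac z\alpha\log(1+t\alpha)-\frac{\sigma t}{\alpha}\big)$. Let $\mathcal S$ be the linear bijection of $\mathbb C[z]$ with $\mathcal Sc_n=z^n$. Let $Z$ be multiplication by $z$, $D$ differentiation, and $E_h$ the shift $(E_hf)(z)=f(z+h)$. Define on $\mathbb C[z]$ the operators $\mathcal U=Z+\sigma/\alpha$, $\mathcal V=\alpha D+1$, and $U=\mathcal S^{-1}\mathcal U\mathcal S$, $V=\mathcal S^{-1}\mathcal V\mathcal S$; equivalently $U=\partial^++\sigma/\alpha$ and $V=\alpha\partial^-+1$,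 where $\partial^+c_n=c_{n+1}$ and $\partial^-c_n=nc_{n-1}$. The operators $U$, $V$, $Z$ and $E_h$ ($h\in\mathbb C$) extend uniquely to continuous linear operators on $\mathcal E^1_{\min}(\mathbb C)$, denoted by the same symbols. *)

theory Defs
  imports "HOL-Analysis.Analysis"
begin

definition Emin :: "(complex \<Rightarrow> complex) set" where
  "Emin = {f. f holomorphic_on UNIV \<and>
              (\<forall>n::nat. n \<ge> 1 \<longrightarrow> bdd_above (range (\<lambda>z. norm (f z) * exp (- norm z / real n))))}"

definition Emin_norm :: "nat \<Rightarrow> (complex \<Rightarrow> complex) \<Rightarrow> real" where
  "Emin_norm n f = (SUP z. norm (f z) * exp (- norm z / real n))"

text \<open>Continuous linear operators on E^1_min (continuity for the locally convex topology
  given by the seminorms Emin_norm n, n \<ge> 1).\<close>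
definition Emin_cont_linear :: "((complex \<Rightarrow> complex) \<Rightarrow> (complex \<Rightarrow> complex)) \<Rightarrow> bool" where
  "Emin_cont_linear T \<longleftrightarrow>
     (\<forall>f\<in>Emin. T f \<in> Emin) \<and>
     (\<forall>f\<in>Emin. \<forall>g\<in>Emin. T (\<lambda>z. f z + g z) = (\<lambda>z. T f z + T g z)) \<and>
     (\<forall>f\<in>Emin. \<forall>c. T (\<lambda>z. c * f z) = (\<lambda>z. c * T f z)) \<and>
     (\<forall>n::nat. n \<ge> 1 \<longrightarrow> (\<exists>m::nat. \<exists>C::real. m \<ge> 1 \<and>
         (\<forall>f\<in>Emin. Emin_norm n (T f) \<le> C * Emin_norm m f)))"

text \<open>The polynomials c_n, via their generating function:
  sum_n t^n/n! c_n(z) = exp((z/alpha) log(1 + t alpha) - sigma t / alpha),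
  i.e. c_n(z) is the n-th derivative in t at t = 0.\<close>
definition charlier :: "real \<Rightarrow> real \<Rightarrow> nat \<Rightarrow> complex \<Rightarrow> complex" where
  "charlier \<alpha> \<sigma> n z =
     ((deriv ^^ n) (\<lambda>t. exp (z / of_real \<alpha> * Ln (1 + t * of_real \<alpha>) - of_real \<sigma> * t / of_real \<alpha>))) 0"

end

theory Submission
  imports Defs "HOL-Complex_Analysis.Complex_Analysis"
begin

text \<open>
  The generating function G(z,t) = exp((z/\<alpha>) Ln(1 + \<alpha> t) - \<sigma> t/\<alpha>) satisfies
  G(z + \<alpha>, t) = (1 + \<alpha> t) G(z, t) and d/dt G(z, t) = (z/(1 + \<alpha> t) - \<sigma>/\<alpha>) G(z, t).
  Comparing Taylor coefficients in t gives c_n(z + \<alpha>) = \<alpha> n c_(n-1)(z) + c_n(z) and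
  z c_n(z - \<alpha>) = c_(n+1)(z) + (\<sigma>/\<alpha>) c_n(z), so V = E_\<alpha> and U = Z E_(-\<alpha>) on every c_n,
  hence on their span. That span contains all polynomials, and by the Cauchy estimates the
  Taylor polynomials of any f in E^1_min converge to f in every seminorm; by continuity the
  identities extend to all of E^1_min.
\<close>

section \<open>Identities for the polynomials c_n\<close>

definition charlier_gf :: "real \<Rightarrow> real \<Rightarrow> complex \<Rightarrow> complex \<Rightarrow> complex" where
  "charlier_gf \<alpha> \<sigma> z =
     (\<lambda>t. exp (z / of_real \<alpha> * Ln (1 + t * of_real \<alpha>) - of_real \<sigma> * t / of_real \<alpha>))"

lemma charlier_eq_higher_deriv_gf: "charlier \<alpha> \<sigma> n z = (deriv ^^ n) (charlier_gf \<alpha> \<sigma> z) 0"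
  unfolding charlier_def charlier_gf_def by simp

lemma charlier_0: "charlier \<alpha> \<sigma> 0 = (\<lambda>z. 1)"
  by (simp add: charlier_def fun_eq_iff)

lemma one_plus_mult_in_ball:
  fixes \<alpha> :: real and t :: complex
  assumes "\<alpha> > 0" "t \<in> ball 0 (1/\<alpha>)"
  shows "1 + t * of_real \<alpha> \<notin> \<real>\<^sub>\<le>\<^sub>0" "1 + t * of_real \<alpha> \<noteq> 0"
proof -
  have "\<alpha> * norm t < 1" using assms by (simp add: field_simps)
  moreover have "\<alpha> * (- Re t) \<le> \<alpha> * norm t"
    using assms(1) abs_Re_le_cmod[of t] by (intro mult_left_mono) auto
  ultimately have Re_pos: "Re (1 + t * of_real \<alpha>) > 0" by (simp add: mult.commute)
  then show "1 + t * of_real \<alpha> \<notin> \<real>\<^sub>\<le>\<^sub>0" by (auto simp: complex_nonpos_Reals_iff)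
  from Re_pos show "1 + t * of_real \<alpha> \<noteq> 0" by (metis less_irrefl zero_complex.sel(1))
qed

lemma charlier_gf_holomorphic:
  assumes "\<alpha> > 0"
  shows "charlier_gf \<alpha> \<sigma> z holomorphic_on ball 0 (1/\<alpha>)"
  unfolding charlier_gf_def
  using assms by (auto intro!: holomorphic_intros one_plus_mult_in_ball[OF assms])

lemma charlier_gf_shift:
  fixes \<alpha> :: real and t :: complex
  assumes "\<alpha> > 0" "t \<in> ball 0 (1/\<alpha>)"
  shows "charlier_gf \<alpha> \<sigma> (z + of_real \<alpha>) t = (1 + t * of_real \<alpha>) * charlier_gf \<alpha> \<sigma> z t"
proof -
  define L where "L = Ln (1 + t * of_real \<alpha>)"
  have "(z + of_real \<alpha>) / of_real \<alpha> * L - of_real \<sigma> * t / of_real \<alpha>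
        = (z / of_real \<alpha> * L - of_real \<sigma> * t / of_real \<alpha>) + L"
    using assms(1) by (simp add: field_simps)
  then have "charlier_gf \<alpha> \<sigma> (z + of_real \<alpha>) t =
             exp ((z / of_real \<alpha> * L - of_real \<sigma> * t / of_real \<alpha>) + L)"
    unfolding charlier_gf_def L_def[symmetric] by (simp only:)
  also have "\<dots> = charlier_gf \<alpha> \<sigma> z t * exp L"
    unfolding charlier_gf_def L_def by (simp only: exp_add)
  also have "exp L = 1 + t * of_real \<alpha>"
    unfolding L_def using one_plus_mult_in_ball(2)[OF assms] by simp
  finally show ?thesis by (simp add: mult.commute)
qed

lemma higher_deriv_ident_mult:
  fixes g :: "complex \<Rightarrow> complex"
  assumes "g holomorphic_on S" "open S" "0 \<in> S"
  shows "(deriv ^^ n) (\<lambda>t. t * g t) 0 = of_nat n * (deriv ^^ (n - 1)) g 0"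
proof -
  have "(deriv ^^ n) (\<lambda>t. t * g t) 0 =
     (\<Sum>i = 0..n. of_nat (n choose i) * (deriv ^^ i) (\<lambda>w. w) 0 * (deriv ^^ (n-i)) g 0)"
    by (rule higher_deriv_mult[OF _ assms]) (auto intro: holomorphic_intros)
  also have "\<dots> = (\<Sum>i = 0..n. if i = 1 then of_nat n * (deriv ^^ (n - 1)) g 0 else 0)"
    by (intro sum.cong) auto
  also have "\<dots> = of_nat n * (deriv ^^ (n - 1)) g 0"
    by (cases n) auto
  finally show ?thesis .
qed

lemma charlier_shift:
  assumes "\<alpha> > 0"
  shows "charlier \<alpha> \<sigma> n (z + of_real \<alpha>) =
     of_real \<alpha> * of_nat n * charlier \<alpha> \<sigma> (n - 1) z + charlier \<alpha> \<sigma> n z"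
proof -
  let ?S = "ball (0::complex) (1/\<alpha>)" and ?G = "charlier_gf \<alpha> \<sigma> z"
  have S: "open ?S" "0 \<in> ?S" using assms by auto
  have G: "?G holomorphic_on ?S" by (rule charlier_gf_holomorphic[OF assms])
  have tG: "(\<lambda>t. t * ?G t) holomorphic_on ?S" by (intro holomorphic_intros G)
  have "(deriv ^^ n) (charlier_gf \<alpha> \<sigma> (z + of_real \<alpha>)) 0 =
        (deriv ^^ n) (\<lambda>t. ?G t + of_real \<alpha> * (t * ?G t)) 0"
    by (rule higher_deriv_transform_within_open[OF charlier_gf_holomorphic[OF assms] _ S])
       (auto intro!: holomorphic_intros G simp: charlier_gf_shift[OF assms] algebra_simps)
  also have "\<dots> = (deriv ^^ n) ?G 0 + (deriv ^^ n) (\<lambda>t. of_real \<alpha> * (t * ?G t)) 0"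
    by (rule higher_deriv_add[OF G _ S]) (intro holomorphic_intros G)
  also have "(deriv ^^ n) (\<lambda>t. of_real \<alpha> * (t * ?G t)) 0 = of_real \<alpha> * (deriv ^^ n) (\<lambda>t. t * ?G t) 0"
    by (rule higher_deriv_cmult[OF tG S(2,1)])
  also have "(deriv ^^ n) (\<lambda>t. t * ?G t) 0 = of_nat n * (deriv ^^ (n - 1)) ?G 0"
    by (rule higher_deriv_ident_mult[OF G S])
  finally show ?thesis unfolding charlier_eq_higher_deriv_gf by (simp add: algebra_simps)
qed

lemma charlier_gf_deriv:
  fixes \<alpha> :: real and t :: complex
  assumes "\<alpha> > 0" "t \<in> ball 0 (1/\<alpha>)"
  shows "deriv (charlier_gf \<alpha> \<sigma> z) t =
           (z / (1 + t * of_real \<alpha>) - of_real \<sigma> / of_real \<alpha>) * charlier_gf \<alpha> \<sigma> z t"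
proof -
  have "(charlier_gf \<alpha> \<sigma> z has_field_derivative
     ((z / (1 + t * of_real \<alpha>) - of_real \<sigma> / of_real \<alpha>) * charlier_gf \<alpha> \<sigma> z t)) (at t)"
    unfolding charlier_gf_def using assms(1)
    by (auto intro!: derivative_eq_intros has_field_derivative_Ln[THEN DERIV_chain2]
             simp: one_plus_mult_in_ball[OF assms] divide_inverse mult_ac)
  then show ?thesis by (rule DERIV_imp_deriv)
qed

lemma charlier_gf_recurrence:
  fixes \<alpha> :: real and t :: complex
  assumes "\<alpha> > 0" "t \<in> ball 0 (1/\<alpha>)"
  shows "z * charlier_gf \<alpha> \<sigma> (z - of_real \<alpha>) t =
           deriv (charlier_gf \<alpha> \<sigma> z) t + of_real (\<sigma> / \<alpha>) * charlier_gf \<alpha> \<sigma> z t"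
proof -
  have "charlier_gf \<alpha> \<sigma> z t = (1 + t * of_real \<alpha>) * charlier_gf \<alpha> \<sigma> (z - of_real \<alpha>) t"
    using charlier_gf_shift[OF assms, of \<sigma> "z - of_real \<alpha>"] by simp
  then have "charlier_gf \<alpha> \<sigma> (z - of_real \<alpha>) t = charlier_gf \<alpha> \<sigma> z t / (1 + t * of_real \<alpha>)"
    using one_plus_mult_in_ball(2)[OF assms] by (simp add: field_simps)
  then show ?thesis
    unfolding charlier_gf_deriv[OF assms] by (simp add: algebra_simps)
qed

lemma charlier_recurrence:
  assumes "\<alpha> > 0"
  shows "z * charlier \<alpha> \<sigma> n (z - of_real \<alpha>) =
     charlier \<alpha> \<sigma> (Suc n) z + of_real (\<sigma> / \<alpha>) * charlier \<alpha> \<sigma> n z"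
proof -
  let ?S = "ball (0::complex) (1/\<alpha>)" and ?G = "charlier_gf \<alpha> \<sigma> z"
  have S: "open ?S" "0 \<in> ?S" using assms by auto
  have G: "?G holomorphic_on ?S" by (rule charlier_gf_holomorphic[OF assms])
  have G': "charlier_gf \<alpha> \<sigma> (z - of_real \<alpha>) holomorphic_on ?S"
    by (rule charlier_gf_holomorphic[OF assms])
  have dG: "deriv ?G holomorphic_on ?S" by (rule holomorphic_deriv[OF G S(1)])
  have "z * charlier \<alpha> \<sigma> n (z - of_real \<alpha>) =
        (deriv ^^ n) (\<lambda>t. z * charlier_gf \<alpha> \<sigma> (z - of_real \<alpha>) t) 0"
    unfolding charlier_eq_higher_deriv_gf by (rule higher_deriv_cmult[OF G' S(2,1), symmetric])
  also have "\<dots> = (deriv ^^ n) (\<lambda>t. deriv ?G t + of_real (\<sigma> / \<alpha>) * ?G t) 0"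
    by (rule higher_deriv_transform_within_open[OF _ _ S])
       (auto intro!: holomorphic_intros G G' dG charlier_gf_recurrence[OF assms]
             simp del: of_real_divide)
  also have "\<dots> = (deriv ^^ n) (deriv ?G) 0 + (deriv ^^ n) (\<lambda>t. of_real (\<sigma> / \<alpha>) * ?G t) 0"
    by (rule higher_deriv_add[OF dG _ S]) (intro holomorphic_intros G)
  also have "(deriv ^^ n) (\<lambda>t. of_real (\<sigma> / \<alpha>) * ?G t) 0 = of_real (\<sigma> / \<alpha>) * (deriv ^^ n) ?G 0"
    by (rule higher_deriv_cmult[OF G S(2,1)])
  also have "(deriv ^^ n) (deriv ?G) 0 = (deriv ^^ Suc n) ?G 0"
    by (simp only: funpow_Suc_right o_def)
  finally show ?thesis unfolding charlier_eq_higher_deriv_gf .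
qed

section \<open>The space E^1_min\<close>

lemma Emin_norm_upper:
  assumes "f \<in> Emin" "n \<ge> 1"
  shows "norm (f z) * exp (- norm z / real n) \<le> Emin_norm n f"
  unfolding Emin_norm_def
  by (rule cSUP_upper) (use assms in \<open>auto simp: Emin_def\<close>)

lemma Emin_norm_nonneg:
  assumes "f \<in> Emin" "n \<ge> 1"
  shows "0 \<le> Emin_norm n f"
  by (rule order_trans[OF _ Emin_norm_upper[OF assms, of 0]]) simp

lemma norm_le_Emin_norm:
  assumes "f \<in> Emin" "n \<ge> 1"
  shows "norm (f z) \<le> Emin_norm n f * exp (norm z / real n)"
proof -
  have "norm (f z) = norm (f z) * exp (- norm z / real n) * exp (norm z / real n)"
    by (simp add: mult.assoc exp_minus field_simps)
  also have "\<dots> \<le> Emin_norm n f * exp (norm z / real n)"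
    by (intro mult_right_mono Emin_norm_upper[OF assms]) auto
  finally show ?thesis .
qed

lemma Emin_norm_least:
  assumes "\<And>z. norm (g z) * exp (- norm z / real n) \<le> B"
  shows "Emin_norm n g \<le> B"
  unfolding Emin_norm_def by (rule cSUP_least) (use assms in auto)

lemma EminI:
  assumes "g holomorphic_on UNIV"
    and "\<And>n::nat. n \<ge> 1 \<Longrightarrow> \<exists>B. \<forall>z. norm (g z) * exp (- norm z / real n) \<le> B"
  shows "g \<in> Emin"
  unfolding Emin_def
proof (intro CollectI conjI allI impI assms(1))
  fix n :: nat assume "n \<ge> 1"
  then obtain B where "\<forall>z. norm (g z) * exp (- norm z / real n) \<le> B" using assms(2) by blast
  then show "bdd_above (range (\<lambda>z. norm (g z) * exp (- norm z / real n)))"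
    by (intro bdd_aboveI2) auto
qed

lemma Emin_holomorphic: "f \<in> Emin \<Longrightarrow> f holomorphic_on UNIV"
  by (simp add: Emin_def)

lemma Emin_add:
  assumes "f \<in> Emin" "g \<in> Emin"
  shows "(\<lambda>z. f z + g z) \<in> Emin"
proof (rule EminI)
  show "(\<lambda>z. f z + g z) holomorphic_on UNIV"
    using assms by (intro holomorphic_intros Emin_holomorphic)
  fix n :: nat assume n: "n \<ge> 1"
  show "\<exists>B. \<forall>z. norm (f z + g z) * exp (- norm z / real n) \<le> B"
  proof (intro exI allI)
    fix z
    have "norm (f z + g z) * exp (- norm z / real n)
       \<le> norm (f z) * exp (- norm z / real n) + norm (g z) * exp (- norm z / real n)"
      using mult_right_mono[OF norm_triangle_ineq[of "f z" "g z"], of "exp (- norm z / real n)"]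
      by (simp add: algebra_simps)
    also have "\<dots> \<le> Emin_norm n f + Emin_norm n g"
      by (intro add_mono Emin_norm_upper assms n)
    finally show "norm (f z + g z) * exp (- norm z / real n) \<le> Emin_norm n f + Emin_norm n g" .
  qed
qed

lemma Emin_cmult:
  assumes "f \<in> Emin"
  shows "(\<lambda>z. c * f z) \<in> Emin"
proof (rule EminI)
  show "(\<lambda>z. c * f z) holomorphic_on UNIV"
    using assms by (intro holomorphic_intros Emin_holomorphic)
  fix n :: nat assume n: "n \<ge> 1"
  show "\<exists>B. \<forall>z. norm (c * f z) * exp (- norm z / real n) \<le> B"
  proof (intro exI allI)
    fix z
    have "norm (c * f z) * exp (- norm z / real n) = norm c * (norm (f z) * exp (- norm z / real n))"
      by (simp add: norm_mult mult.assoc)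
    also have "\<dots> \<le> norm c * Emin_norm n f"
      by (intro mult_left_mono Emin_norm_upper assms n) auto
    finally show "norm (c * f z) * exp (- norm z / real n) \<le> norm c * Emin_norm n f" .
  qed
qed

lemma Emin_diff:
  assumes "f \<in> Emin" "g \<in> Emin"
  shows "(\<lambda>z. f z - g z) \<in> Emin"
  using Emin_add[OF assms(1) Emin_cmult[OF assms(2), of "-1"]] by simp

lemma Emin_const: "(\<lambda>z. c) \<in> Emin"
proof (rule EminI)
  fix n :: nat assume n: "n \<ge> 1"
  show "\<exists>B. \<forall>z::complex. norm c * exp (- norm z / real n) \<le> B"
  proof (intro exI allI)
    fix z :: complex
    have "exp (- norm z / real n) \<le> 1" using n by simp
    then show "norm c * exp (- norm z / real n) \<le> norm c"
      by (simp add: mult_left_le)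
  qed
qed auto

lemma Emin_shift:
  assumes "f \<in> Emin"
  shows "(\<lambda>z. f (z + c)) \<in> Emin"
proof (rule EminI)
  show "(\<lambda>z. f (z + c)) holomorphic_on UNIV"
    by (rule holomorphic_on_compose_gen[of "\<lambda>z. z + c" UNIV f UNIV, unfolded o_def])
       (auto intro: holomorphic_intros Emin_holomorphic[OF assms])
  fix n :: nat assume n: "n \<ge> 1"
  show "\<exists>B. \<forall>z. norm (f (z + c)) * exp (- norm z / real n) \<le> B"
  proof (intro exI allI)
    fix z
    have "- norm z / real n \<le> - norm (z + c) / real n + norm c / real n"
      using n norm_triangle_ineq[of z c] by (simp add: field_simps)
    then have "exp (- norm z / real n) \<le> exp (- norm (z + c) / real n) * exp (norm c / real n)"
      by (simp add: exp_add[symmetric])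
    then have "norm (f (z + c)) * exp (- norm z / real n) \<le>
          (norm (f (z + c)) * exp (- norm (z + c) / real n)) * exp (norm c / real n)"
      by (simp add: mult.assoc mult_left_mono)
    also have "\<dots> \<le> Emin_norm n f * exp (norm c / real n)"
      by (intro mult_right_mono Emin_norm_upper assms n) auto
    finally show "norm (f (z + c)) * exp (- norm z / real n) \<le> Emin_norm n f * exp (norm c / real n)" .
  qed
qed

lemma mult_exp_neg_divide_le:
  assumes "x \<ge> 0" "m > (0::real)"
  shows "x * exp (- x / m) \<le> m"
proof -
  have "x \<le> m * exp (x / m)"
    using exp_ge_add_one_self[of "x / m"] assms by (simp add: field_simps)
  then have "x * exp (- x / m) \<le> m * exp (x / m) * exp (- x / m)"
    by (intro mult_right_mono) auto
  also have "\<dots> = m" by (simp add: mult.assoc exp_add[symmetric])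
  finally show ?thesis .
qed

lemma Emin_ident_mult:
  assumes "f \<in> Emin"
  shows "(\<lambda>z. z * f z) \<in> Emin"
proof (rule EminI)
  show "(\<lambda>z. z * f z) holomorphic_on UNIV"
    using assms by (intro holomorphic_intros Emin_holomorphic)
  fix n :: nat assume n: "n \<ge> 1"
  show "\<exists>B. \<forall>z. norm (z * f z) * exp (- norm z / real n) \<le> B"
  proof (intro exI allI)
    fix z :: complex
    have n2: "2 * n \<ge> 1" using n by simp
    have "exp (- norm z / real n) = exp (- norm z / real (2*n)) * exp (- norm z / real (2*n))"
      using n by (simp add: exp_add[symmetric] field_simps)
    then have "norm (z * f z) * exp (- norm z / real n) =
        (norm z * exp (- norm z / real (2*n))) * (norm (f z) * exp (- norm z / real (2*n)))"
      by (simp add: norm_mult mult_ac)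
    also have "\<dots> \<le> real (2*n) * Emin_norm (2*n) f"
      by (intro mult_mono mult_exp_neg_divide_le Emin_norm_upper[OF assms n2]) (use n in auto)
    finally show "norm (z * f z) * exp (- norm z / real n) \<le> real (2*n) * Emin_norm (2*n) f" .
  qed
qed

lemma Emin_cont_linear_mem: "Emin_cont_linear T \<Longrightarrow> f \<in> Emin \<Longrightarrow> T f \<in> Emin"
  unfolding Emin_cont_linear_def by blast

lemma Emin_cont_linear_add:
  "Emin_cont_linear T \<Longrightarrow> f \<in> Emin \<Longrightarrow> g \<in> Emin \<Longrightarrow> T (\<lambda>z. f z + g z) = (\<lambda>z. T f z + T g z)"
  unfolding Emin_cont_linear_def by blast

lemma Emin_cont_linear_cmult:
  "Emin_cont_linear T \<Longrightarrow> f \<in> Emin \<Longrightarrow> T (\<lambda>z. c * f z) = (\<lambda>z. c * T f z)"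
  unfolding Emin_cont_linear_def by blast

lemma Emin_cont_linear_zero:
  assumes "Emin_cont_linear T"
  shows "T (\<lambda>z. 0) = (\<lambda>z. 0)"
  using Emin_cont_linear_cmult[OF assms Emin_const, of 0 0] by simp

lemma Emin_cont_linear_diff:
  assumes T: "Emin_cont_linear T" and "f \<in> Emin" "g \<in> Emin"
  shows "T (\<lambda>z. f z - g z) = (\<lambda>z. T f z - T g z)"
proof -
  have "T f = T (\<lambda>z. g z + (f z - g z))" by simp
  also have "\<dots> = (\<lambda>z. T g z + T (\<lambda>z. f z - g z) z)"
    by (rule Emin_cont_linear_add[OF T assms(3) Emin_diff[OF assms(2,3)]])
  finally show ?thesis by (simp add: fun_eq_iff algebra_simps)
qed

lemma Emin_cont_linear_tendsto:
  assumes T: "Emin_cont_linear T" and f: "f \<in> Emin" and g: "\<And>N. g N \<in> Emin"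
    and lim: "\<And>m. m \<ge> 1 \<Longrightarrow> (\<lambda>N. Emin_norm m (\<lambda>z. f z - g N z)) \<longlonglongrightarrow> 0"
  shows "(\<lambda>N. T (g N) z) \<longlonglongrightarrow> T f z"
proof -
  obtain m C where m: "m \<ge> 1" and C: "\<forall>h\<in>Emin. Emin_norm 1 (T h) \<le> C * Emin_norm m h"
    using T unfolding Emin_cont_linear_def by auto
  have bound: "norm (T f z - T (g N) z) \<le> C * Emin_norm m (\<lambda>z. f z - g N z) * exp (norm z)" for N
  proof -
    have diff: "(\<lambda>z. f z - g N z) \<in> Emin" by (rule Emin_diff[OF f g])
    have "norm (T f z - T (g N) z) = norm (T (\<lambda>z. f z - g N z) z)"
      by (simp add: Emin_cont_linear_diff[OF T f g])
    also have "\<dots> \<le> Emin_norm 1 (T (\<lambda>z. f z - g N z)) * exp (norm z)"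
      using norm_le_Emin_norm[OF Emin_cont_linear_mem[OF T diff], of 1] by simp
    also have "\<dots> \<le> C * Emin_norm m (\<lambda>z. f z - g N z) * exp (norm z)"
      using C diff by (intro mult_right_mono) simp_all
    finally show ?thesis .
  qed
  have lim0: "(\<lambda>N. C * Emin_norm m (\<lambda>z. f z - g N z) * exp (norm z)) \<longlonglongrightarrow> 0"
    by (intro tendsto_mult_left_zero tendsto_mult_right_zero lim m)
  have "(\<lambda>N. T f z - T (g N) z) \<longlonglongrightarrow> 0"
    by (rule Lim_null_comparison[OF always_eventually[OF allI[OF bound]] lim0])
  from tendsto_diff[OF tendsto_const[of "T f z"] this] show ?thesis by simp
qed

section \<open>The linear span of the c_n\<close>

inductive charlier_span :: "real \<Rightarrow> real \<Rightarrow> (complex \<Rightarrow> complex) \<Rightarrow> bool" for \<alpha> \<sigma> where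
  zero: "charlier_span \<alpha> \<sigma> (\<lambda>z. 0)"
| add_charlier: "charlier_span \<alpha> \<sigma> g \<Longrightarrow> charlier_span \<alpha> \<sigma> (\<lambda>z. g z + c * charlier \<alpha> \<sigma> k z)"

lemma charlier_span_add:
  assumes "charlier_span \<alpha> \<sigma> g" "charlier_span \<alpha> \<sigma> h"
  shows "charlier_span \<alpha> \<sigma> (\<lambda>z. g z + h z)"
  using assms(2)
proof (induction h)
  case zero
  then show ?case using assms(1) by simp
next
  case (add_charlier h c k)
  have "charlier_span \<alpha> \<sigma> (\<lambda>z. (g z + h z) + c * charlier \<alpha> \<sigma> k z)"
    by (rule charlier_span.add_charlier[OF add_charlier.IH])
  then show ?case by (simp add: add.assoc)
qed

lemma charlier_span_cmult:
  assumes "charlier_span \<alpha> \<sigma> g"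
  shows "charlier_span \<alpha> \<sigma> (\<lambda>z. c * g z)"
  using assms
proof (induction g)
  case zero
  then show ?case by (simp add: charlier_span.zero)
next
  case (add_charlier g d k)
  have "charlier_span \<alpha> \<sigma> (\<lambda>z. c * g z + (c * d) * charlier \<alpha> \<sigma> k z)"
    by (rule charlier_span.add_charlier[OF add_charlier.IH])
  then show ?case by (simp add: algebra_simps)
qed

lemma charlier_span_charlier: "charlier_span \<alpha> \<sigma> (charlier \<alpha> \<sigma> k)"
  using charlier_span.add_charlier[OF charlier_span.zero, of \<alpha> \<sigma> 1 k] by simp

lemma charlier_in_Emin:
  assumes "\<alpha> > 0"
  shows "charlier \<alpha> \<sigma> k \<in> Emin"
proof (induction k)
  case 0
  then show ?case by (simp add: charlier_0 Emin_const)
next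
  case (Suc k)
  have "charlier \<alpha> \<sigma> (Suc k) =
          (\<lambda>z. z * charlier \<alpha> \<sigma> k (z + - of_real \<alpha>) + (- of_real (\<sigma> / \<alpha>)) * charlier \<alpha> \<sigma> k z)"
    using charlier_recurrence[OF assms, of _ \<sigma> k] by (auto simp: fun_eq_iff algebra_simps)
  also have "\<dots> \<in> Emin"
    by (intro Emin_add Emin_ident_mult Emin_shift Emin_cmult Suc)
  finally show ?case .
qed

lemma charlier_span_in_Emin:
  assumes "\<alpha> > 0" "charlier_span \<alpha> \<sigma> g"
  shows "g \<in> Emin"
  using assms(2)
  by induction (auto intro!: Emin_add Emin_cmult charlier_in_Emin assms(1) Emin_const)

lemma charlier_span_shift:
  assumes "\<alpha> > 0" "charlier_span \<alpha> \<sigma> g"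
  shows "charlier_span \<alpha> \<sigma> (\<lambda>z. g (z + of_real \<alpha>))"
  using assms(2)
proof induction
  case zero
  then show ?case by (simp add: charlier_span.zero)
next
  case (add_charlier g c k)
  have "charlier_span \<alpha> \<sigma> (\<lambda>z. (g (z + of_real \<alpha>) +
          (c * of_real \<alpha> * of_nat k) * charlier \<alpha> \<sigma> (k - 1) z) + c * charlier \<alpha> \<sigma> k z)"
    by (intro charlier_span.add_charlier add_charlier.IH)
  then show ?case by (simp add: charlier_shift[OF assms(1)] algebra_simps)
qed

lemma charlier_span_ident_mult_shift:
  assumes "\<alpha> > 0" "charlier_span \<alpha> \<sigma> g"
  shows "charlier_span \<alpha> \<sigma> (\<lambda>z. z * g (z - of_real \<alpha>))"
  using assms(2)
proof induction
  case zero
  then show ?case by (simp add: charlier_span.zero)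
next
  case (add_charlier g c k)
  have "charlier_span \<alpha> \<sigma> (\<lambda>z. (z * g (z - of_real \<alpha>) + c * charlier \<alpha> \<sigma> (Suc k) z) +
          (c * of_real (\<sigma> / \<alpha>)) * charlier \<alpha> \<sigma> k z)"
    by (intro charlier_span.add_charlier add_charlier.IH)
  moreover have "z * (g (z - of_real \<alpha>) + c * charlier \<alpha> \<sigma> k (z - of_real \<alpha>)) =
      (z * g (z - of_real \<alpha>) + c * charlier \<alpha> \<sigma> (Suc k) z) +
      (c * of_real (\<sigma> / \<alpha>)) * charlier \<alpha> \<sigma> k z" for z
    using charlier_recurrence[OF assms(1), of z \<sigma> k] by (simp add: algebra_simps)
  ultimately show ?case by simp
qed

text \<open>Multiplication by z factors as (Z E_(-\<alpha>)) E_\<alpha>, and both factors preserve the span.\<close>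
lemma charlier_span_ident_mult:
  assumes "\<alpha> > 0" "charlier_span \<alpha> \<sigma> g"
  shows "charlier_span \<alpha> \<sigma> (\<lambda>z. z * g z)"
  using charlier_span_ident_mult_shift[OF assms(1) charlier_span_shift[OF assms]] by simp

lemma charlier_span_power:
  assumes "\<alpha> > 0"
  shows "charlier_span \<alpha> \<sigma> (\<lambda>z. z ^ k)"
proof (induction k)
  case 0
  then show ?case using charlier_span_charlier[of \<alpha> \<sigma> 0] by (simp add: charlier_0)
next
  case (Suc k)
  then show ?case using charlier_span_ident_mult[OF assms Suc] by simp
qed

lemma charlier_span_polynomial:
  assumes "\<alpha> > 0"
  shows "charlier_span \<alpha> \<sigma> (\<lambda>z. \<Sum>i<N. b i * z ^ i)"
proof (induction N)
  case 0
  then show ?case by (simp add: charlier_span.zero)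
next
  case (Suc N)
  then show ?case
    using charlier_span_add[OF Suc charlier_span_cmult[OF charlier_span_power[OF assms], where c = "b N"]]
    by simp
qed

lemma Emin_cont_linear_on_charlier_span:
  assumes T: "Emin_cont_linear T" and "\<alpha> > 0"
    and T_charlier: "\<And>k. T (charlier \<alpha> \<sigma> k) = (\<lambda>z. \<mu> z * charlier \<alpha> \<sigma> k (h z))"
    and "charlier_span \<alpha> \<sigma> g"
  shows "T g = (\<lambda>z. \<mu> z * g (h z))"
  using assms(4)
proof induction
  case zero
  then show ?case by (simp add: Emin_cont_linear_zero[OF T])
next
  case (add_charlier g c k)
  have g: "g \<in> Emin" by (rule charlier_span_in_Emin[OF assms(2) add_charlier.hyps])
  have ch: "charlier \<alpha> \<sigma> k \<in> Emin" by (rule charlier_in_Emin[OF assms(2)])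
  have "T (\<lambda>z. g z + c * charlier \<alpha> \<sigma> k z) = (\<lambda>z. T g z + T (\<lambda>z. c * charlier \<alpha> \<sigma> k z) z)"
    by (rule Emin_cont_linear_add[OF T g Emin_cmult[OF ch]])
  also have "T (\<lambda>z. c * charlier \<alpha> \<sigma> k z) = (\<lambda>z. c * T (charlier \<alpha> \<sigma> k) z)"
    by (rule Emin_cont_linear_cmult[OF T ch])
  finally show ?case using add_charlier.IH T_charlier by (simp add: algebra_simps)
qed

section \<open>Density of polynomials\<close>

definition taylor_coeff :: "(complex \<Rightarrow> complex) \<Rightarrow> nat \<Rightarrow> complex" where
  "taylor_coeff f k = (deriv ^^ k) f 0 / fact k"

definition taylor_poly :: "(complex \<Rightarrow> complex) \<Rightarrow> nat \<Rightarrow> complex \<Rightarrow> complex" where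
  "taylor_poly f N = (\<lambda>z. \<Sum>k<N. taylor_coeff f k * z ^ k)"

lemma Emin_polynomial: "(\<lambda>z. \<Sum>i<N. b i * z ^ i) \<in> Emin"
proof (induction N)
  case 0
  then show ?case using Emin_const[of 0] by simp
next
  case (Suc N)
  have "(\<lambda>z::complex. z ^ k) \<in> Emin" for k
    by (induction k) (simp_all add: Emin_const Emin_ident_mult)
  with Suc show ?case by (simp add: Emin_add Emin_cmult)
qed

lemma taylor_poly_in_Emin: "taylor_poly f N \<in> Emin"
  unfolding taylor_poly_def by (rule Emin_polynomial)

lemma taylor_series_sums:
  assumes "f holomorphic_on UNIV"
  shows "(\<lambda>k. taylor_coeff f k * w ^ k) sums f w"
proof -
  have "f holomorphic_on ball 0 (norm w + 1)"
    using assms by (rule holomorphic_on_subset) auto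
  from holomorphic_power_series[OF this, of w] show ?thesis by (simp add: taylor_coeff_def)
qed

lemma taylor_coeff_bound:
  assumes "f \<in> Emin" "n \<ge> 1" "R > 0"
  shows "norm (taylor_coeff f k) \<le> Emin_norm n f * exp (R / real n) / R ^ k"
proof -
  have hol: "f holomorphic_on UNIV" by (rule Emin_holomorphic[OF assms(1)])
  have "norm ((deriv ^^ k) f 0) \<le> fact k * (Emin_norm n f * exp (R / real n)) / R ^ k"
  proof (rule Cauchy_inequality)
    show "f holomorphic_on ball 0 R" using hol by (rule holomorphic_on_subset) auto
    show "continuous_on (cball 0 R) f"
      using holomorphic_on_imp_continuous_on[OF hol] by (rule continuous_on_subset) auto
    fix x :: complex assume "norm (0 - x) = R"
    then show "norm (f x) \<le> Emin_norm n f * exp (R / real n)"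
      using norm_le_Emin_norm[OF assms(1,2), of x] by simp
  qed (fact assms(3))
  then show ?thesis by (simp add: taylor_coeff_def norm_divide field_simps)
qed

text \<open>Cauchy estimate on the circle of radius 2|z|, using the seminorm of index 2m.\<close>
lemma taylor_term_bound:
  assumes "f \<in> Emin" "m \<ge> 1"
  shows "norm (taylor_coeff f k * z ^ k) \<le> Emin_norm (2*m) f * exp (norm z / real m) * (1/2) ^ k"
proof (cases "z = 0")
  case True
  have m2: "2*m \<ge> 1" using assms by simp
  have "norm (f 0) \<le> Emin_norm (2*m) f" using norm_le_Emin_norm[OF assms(1) m2, of 0] by simp
  moreover have "0 \<le> Emin_norm (2*m) f" by (rule Emin_norm_nonneg[OF assms(1) m2])
  ultimately show ?thesis using True by (cases k) (simp_all add: taylor_coeff_def)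
next
  case False
  define R where "R = 2 * norm z"
  have R: "R > 0" using False by (simp add: R_def)
  have "norm (taylor_coeff f k * z ^ k) = norm (taylor_coeff f k) * norm z ^ k"
    by (simp add: norm_mult norm_power)
  also have "\<dots> \<le> Emin_norm (2*m) f * exp (R / real (2*m)) / R ^ k * norm z ^ k"
    using assms by (intro mult_right_mono taylor_coeff_bound R) auto
  also have "\<dots> = Emin_norm (2*m) f * exp (norm z / real m) * (norm z / R) ^ k"
    using R by (simp add: R_def power_divide)
  also have "norm z / R = 1/2" using False by (simp add: R_def)
  finally show ?thesis .
qed

lemma taylor_remainder_bound:
  assumes "f \<in> Emin" "m \<ge> 1"
  shows "norm (f z - taylor_poly f N z) \<le> 2 * Emin_norm (2*m) f * exp (norm z / real m) * (1/2) ^ N"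
proof -
  define K where "K = Emin_norm (2*m) f * exp (norm z / real m)"
  define t where "t = (\<lambda>k. taylor_coeff f k * z ^ k)"
  have t_sums: "(\<lambda>i. t (i + N)) sums (f z - taylor_poly f N z)"
    unfolding taylor_poly_def t_def
    by (rule sums_split_initial_segment[OF taylor_series_sums[OF Emin_holomorphic[OF assms(1)]]])
  define g where "g = (\<lambda>i. K * (1/2)^N * (1/2::real) ^ i)"
  have g_sums: "g sums (K * (1/2)^N * 2)"
    unfolding g_def using sums_mult[OF geometric_sums[of "1/2::real"], of "K * (1/2)^N"] by simp
  have t_le_g: "norm (t (i + N)) \<le> g i" for i
    using taylor_term_bound[OF assms, of "i + N" z] by (simp add: t_def g_def K_def power_add mult_ac)
  have summable_t: "summable (\<lambda>i. norm (t (i + N)))"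
    by (rule summable_comparison_test[OF _ sums_summable[OF g_sums]]) (use t_le_g in auto)
  have "norm (f z - taylor_poly f N z) = norm (\<Sum>i. t (i + N))" using sums_unique[OF t_sums] by simp
  also have "\<dots> \<le> (\<Sum>i. norm (t (i + N)))" by (rule summable_norm[OF summable_t])
  also have "\<dots> \<le> (\<Sum>i. g i)" by (rule suminf_le[OF t_le_g summable_t sums_summable[OF g_sums]])
  also have "\<dots> = K * (1/2)^N * 2" using sums_unique[OF g_sums] by simp
  finally show ?thesis by (simp add: K_def mult_ac)
qed

lemma Emin_norm_taylor_remainder_le:
  assumes "f \<in> Emin" "m \<ge> 1"
  shows "Emin_norm m (\<lambda>z. f z - taylor_poly f N z) \<le> 2 * Emin_norm (2*m) f * (1/2) ^ N"
proof (rule Emin_norm_least)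
  fix z :: complex
  have "norm (f z - taylor_poly f N z) * exp (- norm z / real m)
     \<le> (2 * Emin_norm (2*m) f * exp (norm z / real m) * (1/2) ^ N) * exp (- norm z / real m)"
    by (intro mult_right_mono taylor_remainder_bound[OF assms]) auto
  also have "\<dots> = 2 * Emin_norm (2*m) f * (1/2) ^ N * (exp (norm z / real m) * exp (- norm z / real m))"
    by (simp add: mult_ac)
  also have "exp (norm z / real m) * exp (- norm z / real m) = 1"
    by (simp add: exp_add[symmetric])
  finally show "norm (f z - taylor_poly f N z) * exp (- norm z / real m) \<le> 2 * Emin_norm (2*m) f * (1/2) ^ N"
    by simp
qed

lemma Emin_norm_taylor_remainder_tendsto:
  assumes "f \<in> Emin" "m \<ge> 1"
  shows "(\<lambda>N. Emin_norm m (\<lambda>z. f z - taylor_poly f N z)) \<longlonglongrightarrow> 0"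
proof (rule tendsto_sandwich[OF always_eventually always_eventually])
  show "\<forall>N. 0 \<le> Emin_norm m (\<lambda>z. f z - taylor_poly f N z)"
    using assms by (intro allI Emin_norm_nonneg Emin_diff taylor_poly_in_Emin)
  show "(\<lambda>N. 2 * Emin_norm (2*m) f * (1/2::real) ^ N) \<longlonglongrightarrow> 0"
    by (intro tendsto_mult_right_zero LIMSEQ_power_zero) simp
qed (auto intro: Emin_norm_taylor_remainder_le[OF assms])

lemma Emin_cont_linear_eq_on_charlier:
  assumes T: "Emin_cont_linear T" and "\<alpha> > 0"
    and T_charlier: "\<And>k. T (charlier \<alpha> \<sigma> k) = (\<lambda>z. \<mu> z * charlier \<alpha> \<sigma> k (h z))"
    and f: "f \<in> Emin"
  shows "T f z = \<mu> z * f (h z)"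
proof -
  have "T (taylor_poly f N) = (\<lambda>z. \<mu> z * taylor_poly f N (h z))" for N
    unfolding taylor_poly_def
    by (intro Emin_cont_linear_on_charlier_span[OF T assms(2) T_charlier] charlier_span_polynomial assms(2))
  moreover have "(\<lambda>N. T (taylor_poly f N) z) \<longlonglongrightarrow> T f z"
    by (intro Emin_cont_linear_tendsto[OF T f] taylor_poly_in_Emin Emin_norm_taylor_remainder_tendsto f)
  moreover have "(\<lambda>N. \<mu> z * taylor_poly f N (h z)) \<longlonglongrightarrow> \<mu> z * f (h z)"
    using taylor_series_sums[OF Emin_holomorphic[OF f], of "h z"]
    unfolding sums_def taylor_poly_def by (intro tendsto_mult_left) simp
  ultimately show ?thesis by (simp add: LIMSEQ_unique)
qed

theorem proposition5p2:
  fixes \<alpha> \<sigma> :: real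
    and U V :: "(complex \<Rightarrow> complex) \<Rightarrow> (complex \<Rightarrow> complex)"
  assumes "\<alpha> > 0" and "\<sigma> > 0"
    and "Emin_cont_linear U"
    and "\<And>n. U (charlier \<alpha> \<sigma> n) =
               (\<lambda>z. charlier \<alpha> \<sigma> (Suc n) z + of_real (\<sigma> / \<alpha>) * charlier \<alpha> \<sigma> n z)"
    and "Emin_cont_linear V"
    and "\<And>n. V (charlier \<alpha> \<sigma> n) =
               (\<lambda>z. of_real \<alpha> * of_nat n * charlier \<alpha> \<sigma> (n - 1) z + charlier \<alpha> \<sigma> n z)"
  shows "\<forall>f\<in>Emin. \<forall>z. U f z = z * f (z - of_real \<alpha>) \<and> V f z = f (z + of_real \<alpha>)"
proof (intro ballI allI conjI)
  fix f z assume f: "f \<in> Emin"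
  have "U (charlier \<alpha> \<sigma> k) = (\<lambda>z. z * charlier \<alpha> \<sigma> k (z - of_real \<alpha>))" for k
    using assms(4)[of k] charlier_recurrence[OF assms(1), of _ \<sigma> k] by simp
  then show "U f z = z * f (z - of_real \<alpha>)"
    by (rule Emin_cont_linear_eq_on_charlier[OF assms(3,1) _ f])
  have "V (charlier \<alpha> \<sigma> k) = (\<lambda>z. 1 * charlier \<alpha> \<sigma> k (z + of_real \<alpha>))" for k
    using assms(6)[of k] charlier_shift[OF assms(1), of \<sigma> k] by simp
  from Emin_cont_linear_eq_on_charlier[OF assms(5,1) this f]
  show "V f z = f (z + of_real \<alpha>)" by simp
qed

end
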